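(* There is a homomorphism from the Grötzsch graph $M(C_5)$ to $S_4$.
   Context: For a graph $G$ and positive integer $r$, the generalized Mycielskian $M_r(G)$ has vertex set $\{(v,i):v\in V(G),0\le i\le r-1\}\cup\{z\}$, with $(u,i)$ adjacent to $(v,j)$ iff $\{u,v\}\in E(G)$ and ($|i-j|=1$ or $i=j=0$), and $z$ adjacent to all $(v,r-1)$, $v\in V(G)$. $M(G)=M_2(G)$; the Grötzsch graph is $M(C_5)$ where $C_5$ is the $5$-cycle. The symmetric shift graph $S_m$ has vertex set $\{(i,j):1\le i,j\le m,\ i\ne j\}$, and $(i,j)$ is adjacent to $(k,\ell)$ iff $j=k$ or $i=\ell$. *)

theory Defs
  imports Main
begin

record 'a graph =
  verts :: "'a set"
  adj :: "'a \<Rightarrow> 'a \<Rightarrow> bool"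

definition graph_hom :: "'a graph \<Rightarrow> 'b graph \<Rightarrow> ('a \<Rightarrow> 'b) \<Rightarrow> bool" where
  "graph_hom G H f \<longleftrightarrow>
     (\<forall>v\<in>verts G. f v \<in> verts H) \<and>
     (\<forall>u\<in>verts G. \<forall>v\<in>verts G. adj G u v \<longrightarrow> adj H (f u) (f v))"

definition cycle_graph :: "nat \<Rightarrow> nat graph" where
  "cycle_graph n = \<lparr> verts = {0..<n},
     adj = (\<lambda>u v. u < n \<and> v < n \<and> u \<noteq> v \<and> (v = (u + 1) mod n \<or> u = (v + 1) mod n)) \<rparr>"

text \<open>Generalized Mycielskian M_r(G): vertices Some (v,i) for v in V(G), i < r,
  and the apex z = None.\<close>
definition gen_mycielskian :: "nat \<Rightarrow> 'a graph \<Rightarrow> ('a \<times> nat) option graph" where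
  "gen_mycielskian r G = \<lparr>
     verts = Some ` (verts G \<times> {0..<r}) \<union> {None},
     adj = (\<lambda>x y. case (x, y) of
        (Some (u, i), Some (v, j)) \<Rightarrow>
           u \<in> verts G \<and> v \<in> verts G \<and> i < r \<and> j < r \<and> adj G u v \<and>
           (i = j + 1 \<or> j = i + 1 \<or> (i = 0 \<and> j = 0))
      | (None, Some (v, j)) \<Rightarrow> v \<in> verts G \<and> j = r - 1
      | (Some (v, j), None) \<Rightarrow> v \<in> verts G \<and> j = r - 1
      | (None, None) \<Rightarrow> False) \<rparr>"

definition mycielskian :: "'a graph \<Rightarrow> ('a \<times> nat) option graph" where
  "mycielskian G = gen_mycielskian 2 G"

definition sym_shift_graph :: "nat \<Rightarrow> (nat \<times> nat) graph" where
  "sym_shift_graph m = \<lparr>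
     verts = {(i, j). 1 \<le> i \<and> i \<le> m \<and> 1 \<le> j \<and> j \<le> m \<and> i \<noteq> j},
     adj = (\<lambda>(i, j) (k, l). j = k \<or> i = l) \<rparr>"

end

theory Submission
  imports Defs
begin

definition mycielskian_map :: "('a \<Rightarrow> 'b) \<Rightarrow> ('a \<Rightarrow> 'b) \<Rightarrow> 'b \<Rightarrow> ('a \<times> nat) option \<Rightarrow> 'b" where
  "mycielskian_map g s z x =
     (case x of None \<Rightarrow> z | Some (v, i) \<Rightarrow> if i = 0 then g v else s v)"

lemma graph_hom_mycielskian_map:
  assumes outer: "graph_hom G H g"
    and shadow_verts: "\<And>v. v \<in> verts G \<Longrightarrow> s v \<in> verts H"
    and shadow_adj: "\<And>u v. \<lbrakk>u \<in> verts G; v \<in> verts G; adj G u v\<rbrakk>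
                       \<Longrightarrow> adj H (g u) (s v) \<and> adj H (s u) (g v)"
    and apex_vert: "z \<in> verts H"
    and apex_adj: "\<And>v. v \<in> verts G \<Longrightarrow> adj H z (s v) \<and> adj H (s v) z"
  shows "graph_hom (mycielskian G) H (mycielskian_map g s z)"
proof -
  have layers: "i = 0 \<or> i = 1" if "i < (2::nat)" for i
    using that by auto
  show ?thesis
    unfolding graph_hom_def
  proof (intro conjI ballI impI)
    fix x assume "x \<in> verts (mycielskian G)"
    then show "mycielskian_map g s z x \<in> verts H"
      using outer apex_vert shadow_verts
      by (auto simp: mycielskian_def gen_mycielskian_def mycielskian_map_def graph_hom_def)
  next
    fix x y assume "x \<in> verts (mycielskian G)" "y \<in> verts (mycielskian G)"
      and "adj (mycielskian G) x y"
    then show "adj H (mycielskian_map g s z x) (mycielskian_map g s z y)"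
      using outer shadow_adj apex_adj layers
      by (auto simp: mycielskian_def gen_mycielskian_def mycielskian_map_def graph_hom_def)
  qed
qed

lemma adj_cycle_graph:
  "adj (cycle_graph n) u v \<longleftrightarrow>
     u < n \<and> v < n \<and> u \<noteq> v \<and> (v = (u + 1) mod n \<or> u = (v + 1) mod n)"
  by (simp add: cycle_graph_def)

lemma verts_cycle_graph_5: "verts (cycle_graph 5) = {0, 1, 2, 3, 4}"
  by (auto simp: cycle_graph_def)

theorem mainTheorem6:
  shows "\<exists>f. graph_hom (mycielskian (cycle_graph 5)) (sym_shift_graph 4) f"
proof
  let ?g = "(!) [(1, 2), (2, 1), (1, 3), (3, 2), (2, 4)] :: nat \<Rightarrow> nat \<times> nat"
  \<comment> \<open>The apex goes to (3,4), whose neighbours in S_4 are the pairs ending in 3 or starting with 4.\<close>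
  let ?s = "(!) [(4, 2), (4, 1), (1, 3), (4, 1), (2, 3)] :: nat \<Rightarrow> nat \<times> nat"
  show "graph_hom (mycielskian (cycle_graph 5)) (sym_shift_graph 4) (mycielskian_map ?g ?s (3, 4))"
  proof (rule graph_hom_mycielskian_map)
    show "graph_hom (cycle_graph 5) (sym_shift_graph 4) ?g"
      unfolding graph_hom_def verts_cycle_graph_5
      by (simp add: adj_cycle_graph sym_shift_graph_def)
  qed (auto simp: verts_cycle_graph_5 adj_cycle_graph sym_shift_graph_def)
qed

end
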